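(* Let $k$ be a field of characteristic $p\ge5$ and $U_k=\operatorname{Spec}k[e_2,e_4,e_6,(e_4^3-e_6^2)^{-1}]$. Then $R^p\in H^0(U_k,\mathcal{T}_{U_k})$ is not of the form $g\cdot R$ for any $g\in H^0(U_k,\mathcal{O}_{U_k})$; that is, the $p$-curvature of the foliation generated by $R$ on $U_k$ is nonzero.
   Context: $R = \frac{e_2^2-e_4}{12}\frac{\partial}{\partial e_2} + \frac{e_2e_4-e_6}{3}\frac{\partial}{\partial e_4} + \frac{e_2e_6-e_4^2}{2}\frac{\partial}{\partial e_6}$ is the Ramanujan vector field, and $R^p$ is its $p$-fold composite as a derivation (again a derivation in characteristic $p$). *)

theory Defs
  imports Main "HOL-Library.Poly_Mapping"
begin

datatype var = E2 | E4 | E6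

text \<open>The polynomial ring k[e2,e4,e6]: finitely supported maps from monomials
  (finitely supported exponent vectors) to coefficients.\<close>
type_synonym 'k poly3 = "(var \<Rightarrow>\<^sub>0 nat) \<Rightarrow>\<^sub>0 'k"

definition const3 :: "'k::comm_ring_1 \<Rightarrow> 'k poly3" where
  "const3 c = Poly_Mapping.single 0 c"

definition Var3 :: "var \<Rightarrow> 'k::comm_ring_1 poly3" where
  "Var3 v = Poly_Mapping.single (Poly_Mapping.single v 1) 1"

definition pderiv3 :: "var \<Rightarrow> 'k::comm_ring_1 poly3 \<Rightarrow> 'k poly3" where
  "pderiv3 v f = sum (\<lambda>m :: var \<Rightarrow>\<^sub>0 nat.
      Poly_Mapping.single (m - Poly_Mapping.single v 1)
        (of_nat (Poly_Mapping.lookup m v) * Poly_Mapping.lookup f m)) (Poly_Mapping.keys f)"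

definition ramanujan :: "'k::field poly3 \<Rightarrow> 'k poly3" where
  "ramanujan f =
      const3 (1/12) * (Var3 E2 ^ 2 - Var3 E4) * pderiv3 E2 f
    + const3 (1/3) * (Var3 E2 * Var3 E4 - Var3 E6) * pderiv3 E4 f
    + const3 (1/2) * (Var3 E2 * Var3 E6 - Var3 E4 ^ 2) * pderiv3 E6 f"

definition disc3 :: "'k::comm_ring_1 poly3" where
  "disc3 = Var3 E4 ^ 3 - Var3 E6 ^ 2"

text \<open>The ring of global functions on U_k, i.e. k[e2,e4,e6][1/disc3]:
  a pair (f, n) represents f / disc3^n.\<close>
type_synonym 'k locfun = "'k poly3 \<times> nat"

definition loc_eq :: "'k::comm_ring_1 locfun \<Rightarrow> 'k locfun \<Rightarrow> bool" where
  "loc_eq a b = (fst a * disc3 ^ snd b = fst b * disc3 ^ snd a)"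

definition loc_mul :: "'k::comm_ring_1 locfun \<Rightarrow> 'k locfun \<Rightarrow> 'k locfun" where
  "loc_mul a b = (fst a * fst b, snd a + snd b)"

text \<open>The (unique) extension of R to the localization, by the quotient rule.\<close>
definition ramanujan_loc :: "'k::field locfun \<Rightarrow> 'k locfun" where
  "ramanujan_loc a =
     (ramanujan (fst a) * disc3 - of_nat (snd a) * fst a * ramanujan disc3, Suc (snd a))"

end

theory Submission
  imports Defs
begin

text \<open>Write W = d/de2 and H = weight3, which is 1/12 times the Euler field of the grading in
  which e_k has degree k. Then [W, R] = H and [H, R] = R/6, hence
  W R^n = R^n W + n R^(n-1) H + n(n-1)/12 R^(n-1), and in characteristic p the vector field W
  commutes with R^p. If R^p = g R, clearing denominators gives R^p P * disc^m = G * R P for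
  all polynomials P. Applying W, which kills disc, yields G * H P + W G * R P = 0, and
  eliminating W G between P = e2 and P = e4 leaves G * Q = 0 for a nonzero Q; so G = 0 and
  R^p = 0. But R vanishes at (1,1,1), and (1,-10,21) is an eigenvector with eigenvalue 1 of
  its linearisation there. Hence the derivative eigen_deriv at (1,1,1) in that direction
  satisfies eigen_deriv (R f) = eigen_deriv f, and eigen_deriv (R^p e2) = eigen_deriv e2 = 1.\<close>

fun var_idx :: "var \<Rightarrow> nat" where
  "var_idx E2 = 0" | "var_idx E4 = 1" | "var_idx E6 = 2"

lemma inj_var_idx: "inj var_idx"
proof (rule injI)
  show "x = y" if "var_idx x = var_idx y" for x y
    using that by (cases x; cases y) simp_all
qed

text \<open>Any linear order on the variables will do: it orders the monomials, so that the library
  instance makes poly3 an integral domain, in which powers of disc3 can be cancelled.\<close>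
instantiation var :: linorder
begin
definition less_eq_var :: "var \<Rightarrow> var \<Rightarrow> bool" where
  "less_eq_var x y = (var_idx x \<le> var_idx y)"
definition less_var :: "var \<Rightarrow> var \<Rightarrow> bool" where
  "less_var x y = (var_idx x < var_idx y)"
instance
  by standard (auto simp: less_eq_var_def less_var_def inj_eq[OF inj_var_idx])
end

abbreviation X2 :: "'k::comm_ring_1 poly3" where "X2 \<equiv> Var3 E2"
abbreviation X4 :: "'k::comm_ring_1 poly3" where "X4 \<equiv> Var3 E4"
abbreviation X6 :: "'k::comm_ring_1 poly3" where "X6 \<equiv> Var3 E6"

lemma poly_mapping_add_single_induct [case_names zero add_single]:
  fixes f :: "'a \<Rightarrow>\<^sub>0 'b::comm_monoid_add"
  assumes "P 0" and "\<And>f a b. P f \<Longrightarrow> P (f + Poly_Mapping.single a b)"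
  shows "P f"
proof (induction f rule: Poly_Mapping.update_induct)
  case const
  then show ?case using assms(1) .
next
  case (update f a b)
  have "Poly_Mapping.update a b f = f + Poly_Mapping.single a b"
    using update(1)
    by (intro poly_mapping_eqI)
      (auto simp: Poly_Mapping.lookup_update lookup_add lookup_single in_keys_iff when_def)
  then show ?case using assms(2)[OF update(3)] by simp
qed

lemma const3_mult: "const3 (a * b) = const3 a * (const3 b :: 'k::comm_ring_1 poly3)"
  by (simp add: const3_def mult_single)

lemma const3_1 [simp]: "const3 1 = 1"
  by (simp add: const3_def)

lemma const3_of_nat: "const3 (of_nat n) = of_nat n"
  by (simp add: const3_def)

lemma const3_numeral: "const3 (numeral n) = numeral n"
  by (simp add: const3_def)

lemma single_eq_const3_mult: "Poly_Mapping.single m c = const3 c * Poly_Mapping.single m (1::'k::comm_ring_1)"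
  by (simp add: const3_def mult_single)

lemma Var3_power: "Var3 v ^ n = Poly_Mapping.single (Poly_Mapping.single v n) (1::'k::comm_ring_1)"
proof (induction n)
  case (Suc n)
  then show ?case by (simp add: Var3_def mult_single flip: single_add)
qed simp

lemma poly3_induct [case_names const var add mult]:
  fixes P :: "'k::comm_ring_1 poly3 \<Rightarrow> bool"
  assumes const: "\<And>c. P (const3 c)" and var: "\<And>v. P (Var3 v)"
    and add: "\<And>f g. P f \<Longrightarrow> P g \<Longrightarrow> P (f + g)"
    and mult: "\<And>f g. P f \<Longrightarrow> P g \<Longrightarrow> P (f * g)"
  shows "P f"
proof -
  have monomial: "P (Poly_Mapping.single m 1)" for m :: "var \<Rightarrow>\<^sub>0 nat"
  proof (induction m rule: poly_mapping_add_single_induct)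
    case zero
    then show ?case using const[of 1] by (simp add: const3_def)
  next
    case (add_single m v n)
    have "P (Var3 v ^ n)"
      by (induction n) (use const[of 1] var mult in \<open>auto simp: const3_def\<close>)
    moreover have "Poly_Mapping.single (m + Poly_Mapping.single v n) (1::'k)
        = Poly_Mapping.single m 1 * Var3 v ^ n"
      by (simp add: mult_single Var3_power)
    ultimately show ?case using add_single mult by simp
  qed
  show ?thesis
  proof (induction f rule: poly_mapping_add_single_induct)
    case zero
    then show ?case using const[of 0] by (simp add: const3_def)
  next
    case (add_single f m c)
    then show ?case using mult[OF const monomial] add single_eq_const3_mult by metis
  qed
qed

section \<open>Derivations\<close>

locale derivation3 =
  fixes D :: "'k::comm_ring_1 poly3 \<Rightarrow> 'k poly3"
  assumes add: "D (f + g) = D f + D g"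
    and mult: "D (f * g) = f * D g + D f * g"
    and const3: "D (const3 c) = 0"
begin

lemma zero: "D 0 = 0"
  using const3[of 0] by (simp add: const3_def)

lemma one: "D 1 = 0"
  using const3[of 1] by (simp add: const3_def)

lemma numeral: "D (numeral n) = 0"
  using const3[of "numeral n"] by (simp add: const3_numeral)

lemma of_nat: "D (of_nat n) = 0"
  using const3[of "of_nat n"] by (simp add: const3_of_nat)

lemma uminus: "D (- f) = - D f"
  using add[of f "- f"] zero by (simp add: eq_neg_iff_add_eq_0 add.commute)

lemma diff: "D (f - g) = D f - D g"
  using add[of f "- g"] uminus[of g] by simp

lemma power: "D (f ^ n) = of_nat n * f ^ (n - 1) * D f"
proof (induction n)
  case (Suc n)
  then show ?case by (cases n) (simp_all add: mult algebra_simps)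
qed (simp add: one)

lemma power_mult: "D (f ^ n) * f = of_nat n * f ^ n * D f"
proof (cases n)
  case (Suc k)
  then show ?thesis using power[of f n] by (simp add: algebra_simps)
qed (simp add: one)

lemmas simps = add mult const3 zero one numeral of_nat uminus diff power

end

lemma derivation3_eqI:
  assumes "derivation3 D1" "derivation3 D2" "\<And>v. D1 (Var3 v) = D2 (Var3 v)"
  shows "D1 f = D2 (f :: 'k::comm_ring_1 poly3)"
  by (induction f rule: poly3_induct)
    (use assms in \<open>simp_all add: derivation3.simps[OF assms(1)] derivation3.simps[OF assms(2)]\<close>)

lemma derivation3_left_mult: "derivation3 D \<Longrightarrow> derivation3 (\<lambda>f. a * D f)"
  by (simp add: derivation3_def algebra_simps)

lemma derivation3_plus:
  "derivation3 D1 \<Longrightarrow> derivation3 D2 \<Longrightarrow> derivation3 (\<lambda>f. D1 f + D2 f)"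
  by (simp add: derivation3_def algebra_simps)

lemma derivation3_commutator:
  assumes "derivation3 D1" "derivation3 D2"
  shows "derivation3 (\<lambda>f. D1 (D2 f) - D2 (D1 f))"
  unfolding derivation3_def
  by (simp add: derivation3.simps[OF assms(1)] derivation3.simps[OF assms(2)] algebra_simps)

lemma pderiv3_superset:
  assumes "finite S" "Poly_Mapping.keys f \<subseteq> S"
  shows "pderiv3 v f = (\<Sum>m\<in>S. Poly_Mapping.single (m - Poly_Mapping.single v 1)
        (of_nat (Poly_Mapping.lookup m v) * Poly_Mapping.lookup f m))"
  unfolding pderiv3_def
  by (rule sum.mono_neutral_left) (use assms in \<open>auto simp: in_keys_iff\<close>)

lemma pderiv3_add: "pderiv3 v (f + g) = pderiv3 v f + pderiv3 v g"
proof -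
  let ?S = "Poly_Mapping.keys f \<union> Poly_Mapping.keys g"
  have "Poly_Mapping.keys (f + g) \<subseteq> ?S" by (rule keys_add)
  then show ?thesis
    by (simp add: pderiv3_superset[of ?S] lookup_add distrib_left single_add sum.distrib)
qed

lemma pderiv3_zero [simp]: "pderiv3 v 0 = 0"
  by (simp add: pderiv3_def)

lemma pderiv3_single:
  "pderiv3 v (Poly_Mapping.single m c) = Poly_Mapping.single (m - Poly_Mapping.single v 1)
        (of_nat (Poly_Mapping.lookup m v) * c)"
  by (subst pderiv3_superset[of "{m}"]) auto

lemma add_minus_single_assoc:
  fixes a c :: "'a \<Rightarrow>\<^sub>0 nat"
  assumes "Poly_Mapping.lookup c v \<noteq> 0"
  shows "a + (c - Poly_Mapping.single v 1) = a + c - Poly_Mapping.single v 1"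
  using assms
  by (intro poly_mapping_eqI) (auto simp: lookup_add lookup_minus lookup_single when_def)

text \<open>Monus on exponents is harmless here: a monomial not containing v gets coefficient 0.\<close>
lemma single_minus_single:
  "(Poly_Mapping.single (a + (c - Poly_Mapping.single v 1)) (of_nat (Poly_Mapping.lookup c v) * b)
     :: 'k::comm_ring_1 poly3)
   = Poly_Mapping.single (a + c - Poly_Mapping.single v 1) (of_nat (Poly_Mapping.lookup c v) * b)"
  using add_minus_single_assoc[of c v a] by (cases "Poly_Mapping.lookup c v = 0") auto

lemma pderiv3_mult_single:
  "pderiv3 v (Poly_Mapping.single a b * Poly_Mapping.single c d) =
    Poly_Mapping.single a b * pderiv3 v (Poly_Mapping.single c d)
    + pderiv3 v (Poly_Mapping.single a b) * (Poly_Mapping.single c d :: 'k::comm_ring_1 poly3)"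
  using single_minus_single[of a c v "b * d"] single_minus_single[of c a v "b * d"]
  by (simp add: mult_single pderiv3_single lookup_add single_add[symmetric] add.commute
      algebra_simps)

lemma pderiv3_mult: "pderiv3 v (f * g) = f * pderiv3 v g + pderiv3 v f * (g :: 'k::comm_ring_1 poly3)"
proof (induction f rule: poly_mapping_add_single_induct)
  case (add_single f a b)
  have "pderiv3 v (Poly_Mapping.single a b * g)
      = Poly_Mapping.single a b * pderiv3 v g + pderiv3 v (Poly_Mapping.single a b) * g"
    by (induction g rule: poly_mapping_add_single_induct)
      (simp_all add: distrib_left distrib_right pderiv3_add pderiv3_mult_single)
  with add_single show ?case by (simp add: distrib_left distrib_right pderiv3_add)
qed simp

lemma derivation3_pderiv3: "derivation3 (pderiv3 v)"
  by unfold_locales (simp_all add: pderiv3_add pderiv3_mult const3_def pderiv3_single)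

lemma pderiv3_Var3 [simp]: "pderiv3 v (Var3 w) = (if v = w then 1 else 0)"
  by (simp add: Var3_def pderiv3_single lookup_single when_def)

section \<open>The commutation relations of R, d/de2 and the weight field\<close>

lemma derivation3_ramanujan: "derivation3 (ramanujan :: 'k::field poly3 \<Rightarrow> _)"
proof -
  have "derivation3 (\<lambda>f::'k poly3. (const3 (1/12) * (X2 ^ 2 - X4) * pderiv3 E2 f
      + const3 (1/3) * (X2 * X4 - X6) * pderiv3 E4 f) + const3 (1/2) * (X2 * X6 - X4 ^ 2) * pderiv3 E6 f)"
    by (intro derivation3_plus derivation3_left_mult derivation3_pderiv3)
  then show ?thesis unfolding ramanujan_def[abs_def] .
qed

lemma twelve_nonzero_iff: "(12::'k::field) \<noteq> 0 \<longleftrightarrow> (2::'k) \<noteq> 0 \<and> (3::'k) \<noteq> 0"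
proof -
  have "(12::'k) = 2 * 2 * 3" by simp
  then show ?thesis by (simp only: mult_eq_0_iff) blast
qed

lemma const3_inverse_12_mult:
  assumes "(12::'k::field) \<noteq> 0"
  shows "const3 (1/2) = 6 * const3 (1/12 :: 'k)" "const3 (1/3) = 4 * const3 (1/12 :: 'k)"
proof -
  have "(1/2 :: 'k) = 6 * (1/12)" "(1/3 :: 'k) = 4 * (1/12)"
    using assms assms[unfolded twelve_nonzero_iff] by (simp_all add: field_simps)
  then show "const3 (1/2) = 6 * const3 (1/12 :: 'k)" "const3 (1/3) = 4 * const3 (1/12 :: 'k)"
    by (simp_all only: const3_mult const3_numeral)
qed

lemma ramanujan_Var3:
  assumes "(12::'k::field) \<noteq> 0"
  shows "ramanujan X2 = const3 (1/12) * (X2 ^ 2 - X4 :: 'k poly3)"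
    and "ramanujan X4 = const3 (1/12) * (4 * (X2 * X4 - X6) :: 'k poly3)"
    and "ramanujan X6 = const3 (1/12) * (6 * (X2 * X6 - X4 ^ 2) :: 'k poly3)"
  by (simp_all add: ramanujan_def const3_inverse_12_mult[OF assms] algebra_simps)

definition weight3 :: "'k::field poly3 \<Rightarrow> 'k poly3" where
  "weight3 f = const3 (1/12) * (2 * X2 * pderiv3 E2 f + 4 * X4 * pderiv3 E4 f + 6 * X6 * pderiv3 E6 f)"

lemma derivation3_weight3: "derivation3 (weight3 :: 'k::field poly3 \<Rightarrow> _)"
proof -
  have "derivation3 (\<lambda>f::'k poly3. const3 (1/12) *
      ((2 * X2 * pderiv3 E2 f + 4 * X4 * pderiv3 E4 f) + 6 * X6 * pderiv3 E6 f))"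
    by (intro derivation3_plus derivation3_left_mult derivation3_pderiv3)
  then show ?thesis unfolding weight3_def[abs_def] by (simp add: mult.assoc)
qed

lemma commutator_eqI:
  assumes "derivation3 D1" "derivation3 D2" "derivation3 C"
    and "\<And>v. D1 (D2 (Var3 v)) = D2 (D1 (Var3 v)) + C (Var3 v)"
  shows "D1 (D2 f) = D2 (D1 f) + C (f :: 'k::comm_ring_1 poly3)"
proof -
  have "D1 (D2 f) - D2 (D1 f) = C f"
    by (rule derivation3_eqI[OF derivation3_commutator[OF assms(1,2)] assms(3)])
      (simp add: assms(4))
  then show ?thesis by (simp add: algebra_simps)
qed

lemma pderiv3_E2_ramanujan:
  assumes "(12::'k::field) \<noteq> 0"
  shows "pderiv3 E2 (ramanujan f) = ramanujan (pderiv3 E2 f) + weight3 (f :: 'k poly3)"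
proof (rule commutator_eqI[OF derivation3_pderiv3 derivation3_ramanujan derivation3_weight3])
  show "pderiv3 E2 (ramanujan (Var3 v)) = ramanujan (pderiv3 E2 (Var3 v)) + weight3 (Var3 v :: 'k poly3)"
    for v
    by (cases v) (simp_all add: ramanujan_Var3[OF assms] weight3_def
        derivation3.simps[OF derivation3_pderiv3] derivation3.simps[OF derivation3_ramanujan]
        algebra_simps)
qed

lemma weight3_ramanujan:
  assumes "(12::'k::field) \<noteq> 0"
  shows "weight3 (ramanujan f) = ramanujan (weight3 f) + 2 * const3 (1/12) * ramanujan (f :: 'k poly3)"
proof (rule commutator_eqI[OF derivation3_weight3 derivation3_ramanujan])
  show "derivation3 (\<lambda>f::'k poly3. 2 * const3 (1/12) * ramanujan f)"
    by (rule derivation3_left_mult[OF derivation3_ramanujan])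
  show "weight3 (ramanujan (Var3 v)) = ramanujan (weight3 (Var3 v))
      + 2 * const3 (1/12) * ramanujan (Var3 v :: 'k poly3)" for v
    by (cases v) (simp_all add: ramanujan_Var3[OF assms] weight3_def
        derivation3.simps[OF derivation3_pderiv3] derivation3.simps[OF derivation3_ramanujan]
        algebra_simps power2_eq_square)
qed

lemma funpow_commutator:
  fixes W H R :: "'a::comm_ring_1 \<Rightarrow> 'a" and c :: 'a
  assumes R_add: "\<And>f g. R (f + g) = R f + R g"
    and R_mult_c: "\<And>f. R (c * f) = c * R f"
    and W_R: "\<And>f. W (R f) = R (W f) + H f"
    and H_R: "\<And>f. H (R f) = R (H f) + 2 * c * R f"
  shows "W ((R ^^ Suc n) f) = (R ^^ Suc n) (W f) + of_nat (Suc n) * (R ^^ n) (H f)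
      + c * of_nat (Suc n * n) * (R ^^ n) f"
proof -
  have R_zero: "R 0 = 0"
    using R_add[of 0 0] by simp
  have R_of_nat: "R (of_nat k * f) = of_nat k * R f" for k f
    by (induction k) (simp_all add: R_zero R_add distrib_right)
  have R_c_of_nat: "R (c * of_nat k * f) = c * of_nat k * R f" for k f
    using R_mult_c[of "of_nat k * f"] R_of_nat[of k f] by (simp add: mult.assoc)
  have H_funpow: "H ((R ^^ k) f) = (R ^^ k) (H f) + 2 * c * of_nat k * (R ^^ k) f" for k
  proof (induction k)
    case (Suc k)
    have "H ((R ^^ Suc k) f) = R ((R ^^ k) (H f) + 2 * c * of_nat k * (R ^^ k) f) + 2 * c * (R ^^ Suc k) f"
      using H_R[of "(R ^^ k) f"] Suc by simp
    also have "\<dots> = (R ^^ Suc k) (H f) + 2 * c * of_nat k * (R ^^ Suc k) f + 2 * c * (R ^^ Suc k) f"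
      using R_mult_c[of "2 * of_nat k * (R ^^ k) f"] R_of_nat[of "2 * k" "(R ^^ k) f"]
      by (simp add: R_add mult.assoc mult.left_commute)
    finally show ?case by (simp add: algebra_simps)
  qed simp
  show ?thesis
  proof (induction n)
    case 0
    then show ?case by (simp add: W_R)
  next
    case (Suc n)
    have "W ((R ^^ Suc (Suc n)) f) = R (W ((R ^^ Suc n) f)) + H ((R ^^ Suc n) f)"
      by (simp add: W_R)
    also have "\<dots> = (R ^^ Suc (Suc n)) (W f) + of_nat (Suc n) * (R ^^ Suc n) (H f)
        + c * of_nat (Suc n * n) * (R ^^ Suc n) f
        + ((R ^^ Suc n) (H f) + 2 * c * of_nat (Suc n) * (R ^^ Suc n) f)"
      unfolding Suc H_funpow by (simp only: R_add R_of_nat R_c_of_nat funpow.simps comp_def)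
    finally show ?case by (simp add: algebra_simps)
  qed
qed

lemma pderiv3_E2_funpow_ramanujan:
  assumes "(12::'k::field) \<noteq> 0" and "(of_nat n :: 'k) = 0"
  shows "pderiv3 E2 ((ramanujan ^^ n) f) = (ramanujan ^^ n) (pderiv3 E2 (f :: 'k poly3))"
proof (cases n)
  case (Suc k)
  have "(of_nat (Suc k) :: 'k poly3) = const3 (of_nat n)"
    unfolding Suc by (rule const3_of_nat[symmetric])
  also have "\<dots> = 0"
    using assms(2) by (simp add: const3_def)
  finally have char: "(of_nat (Suc k) :: 'k poly3) = 0" .
  have "pderiv3 E2 ((ramanujan ^^ Suc k) f) = (ramanujan ^^ Suc k) (pderiv3 E2 f)
      + of_nat (Suc k) * (ramanujan ^^ k) (weight3 f)
      + const3 (1/12) * of_nat (Suc k * k) * (ramanujan ^^ k) f"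
    by (rule funpow_commutator) (simp_all add: derivation3.simps[OF derivation3_ramanujan]
        pderiv3_E2_ramanujan[OF assms(1)] weight3_ramanujan[OF assms(1)])
  then show ?thesis
    unfolding Suc by (simp only: of_nat_mult char mult_zero_left mult_zero_right add_0_right)
qed simp

section \<open>A point derivation at the zero (1,1,1) of R\<close>

definition eval_ones :: "'k::comm_ring_1 poly3 \<Rightarrow> 'k" where
  "eval_ones f = sum (Poly_Mapping.lookup f) (Poly_Mapping.keys f)"

lemma eval_ones_superset:
  "finite S \<Longrightarrow> Poly_Mapping.keys f \<subseteq> S \<Longrightarrow>
    eval_ones f = sum (Poly_Mapping.lookup f) S"
  unfolding eval_ones_def by (rule sum.mono_neutral_left) (auto simp: in_keys_iff)

lemma eval_ones_add: "eval_ones (f + g) = eval_ones f + eval_ones g"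
proof -
  let ?S = "Poly_Mapping.keys f \<union> Poly_Mapping.keys g"
  have "Poly_Mapping.keys (f + g) \<subseteq> ?S" by (rule keys_add)
  then show ?thesis
    by (simp add: eval_ones_superset[of ?S] lookup_add sum.distrib)
qed

lemma eval_ones_zero [simp]: "eval_ones 0 = 0"
  by (simp add: eval_ones_def)

lemma eval_ones_single [simp]: "eval_ones (Poly_Mapping.single m c) = c"
  by (subst eval_ones_superset[of "{m}"]) auto

lemma eval_ones_mult: "eval_ones (f * g) = eval_ones f * eval_ones (g :: 'k::comm_ring_1 poly3)"
proof (induction f rule: poly_mapping_add_single_induct)
  case (add_single f a b)
  have "eval_ones (Poly_Mapping.single a b * g) = b * eval_ones g"
    by (induction g rule: poly_mapping_add_single_induct)
      (simp_all add: distrib_left eval_ones_add mult_single)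
  with add_single show ?case by (simp add: distrib_right eval_ones_add)
qed simp

lemma eval_ones_uminus: "eval_ones (- f) = - eval_ones f"
  using eval_ones_add[of f "- f"] by (simp add: eq_neg_iff_add_eq_0 add.commute)

lemma eval_ones_diff: "eval_ones (f - g) = eval_ones f - eval_ones g"
  using eval_ones_add[of f "- g"] eval_ones_uminus[of g] by simp

lemma eval_ones_const3 [simp]: "eval_ones (const3 c) = c"
  by (simp add: const3_def)

lemma const3_eq_0_iff: "const3 c = 0 \<longleftrightarrow> c = (0::'k::comm_ring_1)"
  by (metis const3_def eval_ones_const3 single_zero)

lemma eval_ones_one [simp]: "eval_ones 1 = 1"
  by (metis const3_1 eval_ones_const3)

lemma eval_ones_power: "eval_ones (f ^ n) = eval_ones f ^ n"
  by (induction n) (simp_all add: eval_ones_mult)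

lemma eval_ones_Var3 [simp]: "eval_ones (Var3 v) = 1"
  by (simp add: Var3_def)

lemma eval_ones_numeral [simp]: "eval_ones (numeral n) = numeral n"
  using eval_ones_const3[of "numeral n"] by (simp add: const3_numeral)

lemmas eval_ones_simps = eval_ones_add eval_ones_mult eval_ones_uminus eval_ones_diff eval_ones_power

lemma eval_ones_ramanujan: "eval_ones (ramanujan f) = (0 :: 'k::field)"
  by (simp add: ramanujan_def eval_ones_simps)

locale point_derivation =
  fixes L :: "'k::comm_ring_1 poly3 \<Rightarrow> 'k"
  assumes add: "L (f + g) = L f + L g"
    and mult: "L (f * g) = eval_ones f * L g + L f * eval_ones g"
    and const3: "L (const3 c) = 0"
begin

lemma zero: "L 0 = 0"
  using const3[of 0] by (simp add: const3_def)

lemma numeral: "L (numeral n) = 0"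
  using const3[of "numeral n"] by (simp add: const3_numeral)

lemma uminus: "L (- f) = - L f"
  using add[of f "- f"] zero by (simp add: eq_neg_iff_add_eq_0 add.commute)

lemma diff: "L (f - g) = L f - L g"
  using add[of f "- g"] uminus[of g] by simp

lemma power: "L (f ^ n) = of_nat n * eval_ones f ^ (n - 1) * L f"
proof (induction n)
  case 0
  then show ?case using const3[of 1] by (simp add: const3_def)
next
  case (Suc n)
  then show ?case by (cases n) (simp_all add: mult eval_ones_power eval_ones_mult algebra_simps)
qed

lemmas simps = add mult const3 zero numeral uminus diff power

end

lemma point_derivation_eqI:
  assumes "point_derivation L1" "point_derivation L2" "\<And>v. L1 (Var3 v) = L2 (Var3 v)"
  shows "L1 f = L2 (f :: 'k::comm_ring_1 poly3)"
  by (induction f rule: poly3_induct)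
    (use assms in \<open>simp_all add: point_derivation.simps[OF assms(1)]
      point_derivation.simps[OF assms(2)]\<close>)

lemma point_derivation_comp_derivation3:
  assumes "point_derivation L" "derivation3 D" "\<And>f. eval_ones (D f) = 0"
  shows "point_derivation (\<lambda>f. L (D f))"
  by unfold_locales
    (simp_all add: assms(3) point_derivation.simps[OF assms(1)] derivation3.simps[OF assms(2)])

definition eigen_deriv :: "'k::comm_ring_1 poly3 \<Rightarrow> 'k" where
  "eigen_deriv f =
     eval_ones (pderiv3 E2 f) - 10 * eval_ones (pderiv3 E4 f) + 21 * eval_ones (pderiv3 E6 f)"

lemma point_derivation_eigen_deriv: "point_derivation eigen_deriv"
  by unfold_locales
    (simp_all add: eigen_deriv_def derivation3.simps[OF derivation3_pderiv3] eval_ones_simps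
      algebra_simps)

lemma eigen_deriv_Var3 [simp]: "eigen_deriv X2 = 1" "eigen_deriv X4 = -10" "eigen_deriv X6 = 21"
  by (simp_all add: eigen_deriv_def)

lemma eigen_deriv_ramanujan:
  assumes "(12::'k::field) \<noteq> 0"
  shows "eigen_deriv (ramanujan f) = eigen_deriv (f :: 'k poly3)"
proof (rule point_derivation_eqI)
  show "point_derivation (\<lambda>f::'k poly3. eigen_deriv (ramanujan f))"
    by (rule point_derivation_comp_derivation3[OF point_derivation_eigen_deriv
          derivation3_ramanujan eval_ones_ramanujan])
  show "eigen_deriv (ramanujan (Var3 v)) = eigen_deriv (Var3 v :: 'k poly3)" for v
    using assms
    by (cases v) (simp_all add: ramanujan_Var3[OF assms]
        point_derivation.simps[OF point_derivation_eigen_deriv] eval_ones_simps)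
qed (rule point_derivation_eigen_deriv)

lemma funpow_ramanujan_X2_nonzero:
  assumes "(12::'k::field) \<noteq> 0"
  shows "(ramanujan ^^ n) X2 \<noteq> (0 :: 'k poly3)"
proof -
  have "eigen_deriv ((ramanujan ^^ n) X2) = (1::'k)"
    by (induction n) (simp_all add: eigen_deriv_ramanujan[OF assms])
  then show ?thesis
    by (metis point_derivation.zero[OF point_derivation_eigen_deriv] zero_neq_one)
qed

section \<open>The p-curvature of R\<close>

lemma disc3_nonzero: "(disc3 :: 'k::comm_ring_1 poly3) \<noteq> 0"
proof
  assume "(disc3 :: 'k poly3) = 0"
  then have "Poly_Mapping.lookup (disc3 :: 'k poly3) (Poly_Mapping.single E6 2) = 0"
    by simp
  moreover have "Poly_Mapping.single E4 3 \<noteq> Poly_Mapping.single E6 (2::nat)"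
    by (metis lookup_single_eq lookup_single_not_eq var.distinct(5) zero_neq_numeral)
  then have "Poly_Mapping.lookup (disc3 :: 'k poly3) (Poly_Mapping.single E6 2) = -1"
    by (simp add: disc3_def Var3_power lookup_minus lookup_single)
  ultimately show False by simp
qed

lemma pderiv3_E2_disc3_power: "pderiv3 E2 ((disc3 :: 'k::comm_ring_1 poly3) ^ m) = 0"
  by (simp add: disc3_def derivation3.simps[OF derivation3_pderiv3])

lemma funpow_ramanujan_loc_poly:
  "(ramanujan_loc ^^ n) (P, 0) = ((ramanujan ^^ n) P * disc3 ^ n, n)" for P :: "'k::field poly3"
proof (induction n)
  case (Suc n)
  have "ramanujan ((ramanujan ^^ n) P * disc3 ^ n) * disc3
      - of_nat n * ((ramanujan ^^ n) P * disc3 ^ n) * ramanujan disc3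
      = (ramanujan ^^ Suc n) P * disc3 ^ Suc n"
  proof -
    have "ramanujan ((ramanujan ^^ n) P * disc3 ^ n) * disc3
        = (ramanujan ^^ n) P * (ramanujan (disc3 ^ n) * disc3) + (ramanujan ^^ Suc n) P * disc3 ^ Suc n"
      by (simp add: derivation3.mult[OF derivation3_ramanujan] algebra_simps)
    then show ?thesis
      by (simp add: derivation3.power_mult[OF derivation3_ramanujan])
  qed
  then show ?case using Suc.IH by (simp add: ramanujan_loc_def)
qed simp

lemma ramanujan_loc_relation_poly:
  fixes G :: "'k::field poly3"
  assumes "\<And>a. loc_eq ((ramanujan_loc ^^ n) a) (loc_mul (G, m) (ramanujan_loc a))"
  shows "(ramanujan ^^ n) P * disc3 ^ m = G * ramanujan P"
proof -
  have "(ramanujan ^^ n) P * disc3 ^ n * disc3 ^ Suc m = G * (ramanujan P * disc3) * disc3 ^ n"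
    using assms[of "(P, 0)"]
    by (simp add: funpow_ramanujan_loc_poly loc_eq_def loc_mul_def ramanujan_loc_def)
  then have "((ramanujan ^^ n) P * disc3 ^ m - G * ramanujan P) * disc3 ^ Suc n = 0"
    by (simp add: algebra_simps)
  then show ?thesis by (simp add: disc3_nonzero)
qed

lemma multiplier_equation:
  fixes G :: "'k::field poly3"
  assumes "(12::'k) \<noteq> 0" and "(of_nat n :: 'k) = 0"
    and rel: "\<And>P. (ramanujan ^^ n) P * disc3 ^ m = G * ramanujan P"
  shows "G * weight3 P + pderiv3 E2 G * ramanujan P = 0"
proof -
  have "(ramanujan ^^ n) (pderiv3 E2 P) * disc3 ^ m = pderiv3 E2 ((ramanujan ^^ n) P * disc3 ^ m)"
    by (simp add: derivation3.mult[OF derivation3_pderiv3] pderiv3_E2_disc3_power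
        pderiv3_E2_funpow_ramanujan[OF assms(1,2)])
  also have "\<dots> = pderiv3 E2 (G * ramanujan P)"
    by (simp only: rel)
  also have "\<dots> = G * ramanujan (pderiv3 E2 P) + (G * weight3 P + pderiv3 E2 G * ramanujan P)"
    by (simp add: derivation3.mult[OF derivation3_pderiv3] pderiv3_E2_ramanujan[OF assms(1)]
        algebra_simps)
  finally show ?thesis using rel[of "pderiv3 E2 P"] by simp
qed

lemma quartic_form_nonzero:
  assumes "(2::'k::comm_ring_1) \<noteq> 0"
  shows "X2 ^ 2 * X4 - 2 * X2 * X6 + X4 ^ 2 \<noteq> (0 :: 'k poly3)"
proof
  assume "X2 ^ 2 * X4 - 2 * X2 * X6 + X4 ^ 2 = (0 :: 'k poly3)"
  then have "pderiv3 E4 (pderiv3 E4 (X2 ^ 2 * X4 - 2 * X2 * X6 + X4 ^ 2)) = (0 :: 'k poly3)"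
    by simp
  then have "(2 :: 'k poly3) = 0"
    by (simp add: derivation3.simps[OF derivation3_pderiv3])
  then have "eval_ones (2 :: 'k poly3) = 0"
    by simp
  then show False
    using assms by simp
qed

lemma multiplier_eq_0:
  fixes G :: "'k::field poly3"
  assumes "(12::'k) \<noteq> 0" and "(of_nat n :: 'k) = 0"
    and "\<And>P. (ramanujan ^^ n) P * disc3 ^ m = G * ramanujan P"
  shows "G = 0"
proof -
  note eq = multiplier_equation[OF assms]
  have "weight3 X2 * ramanujan X4 - weight3 X4 * ramanujan X2
      = const3 (1/12) * const3 (1/3) * (X2 ^ 2 * X4 - 2 * X2 * X6 + X4 ^ 2 :: 'k poly3)"
    by (simp add: weight3_def ramanujan_Var3[OF assms(1)] const3_inverse_12_mult[OF assms(1)]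
        algebra_simps power2_eq_square)
  moreover have "G * (weight3 X2 * ramanujan X4 - weight3 X4 * ramanujan X2)
      = ramanujan X4 * (G * weight3 X2 + pderiv3 E2 G * ramanujan X2)
      - ramanujan X2 * (G * weight3 X4 + pderiv3 E2 G * ramanujan X4)"
    by (simp add: algebra_simps)
  ultimately have "G * (const3 (1/12) * const3 (1/3) * (X2 ^ 2 * X4 - 2 * X2 * X6 + X4 ^ 2)) = 0"
    using eq by simp
  then show "G = 0"
    using assms(1) assms(1)[unfolded twelve_nonzero_iff] quartic_form_nonzero[where 'k='k]
    by (simp add: const3_eq_0_iff)
qed

theorem corollary2p5:
  fixes p :: nat
  assumes "CHAR('k::field) = p" and "p \<ge> 5"
  shows "\<not> (\<exists>g :: 'k locfun. \<forall>a :: 'k locfun.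
            loc_eq ((ramanujan_loc ^^ p) a) (loc_mul g (ramanujan_loc a)))"
proof
  assume "\<exists>g :: 'k locfun. \<forall>a :: 'k locfun.
            loc_eq ((ramanujan_loc ^^ p) a) (loc_mul g (ramanujan_loc a))"
  then obtain G m where rel:
    "\<And>a :: 'k locfun. loc_eq ((ramanujan_loc ^^ p) a) (loc_mul (G, m) (ramanujan_loc a))"
    by auto
  have char_p: "(of_nat p :: 'k) = 0"
    using assms(1) by (simp add: of_nat_eq_0_iff_char_dvd)
  have "(of_nat k :: 'k) \<noteq> 0" if "0 < k" "k < 5" for k
    using that assms by (auto simp: of_nat_eq_0_iff_char_dvd dest: dvd_imp_le)
  from this[of 2] this[of 3] have "(12::'k) \<noteq> 0"
    by (simp add: twelve_nonzero_iff)
  note poly_rel = ramanujan_loc_relation_poly[OF rel]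
  have "G = 0"
    using multiplier_eq_0[OF \<open>12 \<noteq> 0\<close> char_p poly_rel] .
  then have "(ramanujan ^^ p) X2 = (0 :: 'k poly3)"
    using poly_rel[of X2] by (simp add: disc3_nonzero)
  then show False
    using funpow_ramanujan_X2_nonzero[OF \<open>12 \<noteq> 0\<close>] by blast
qed

end
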